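(* Let $T \ge 1$ and $E \ge 0$ be integers, let $f \in \mathbb{R}[x]$ have at most $T$ nonzero terms, and let $\xi_1, \dots, \xi_{2T+2E}$ be distinct positive real numbers. Suppose we are given values $y_i = f(\xi_i) + \epsilon_i$, $1 \le i \le 2T+2E$, where $\epsilon_i \in \mathbb{R}$ and at most $E$ of the $\epsilon_i$ are nonzero. If $g \in \mathbb{R}[x]$ has at most $T$ nonzero terms and satisfies $g(\xi_i) = y_i$ for at least $2T+E$ indices $i$, then $g = f$. *)

theory Defs
  imports "HOL-Computational_Algebra.Polynomial"
begin

definition num_terms :: "'a::zero poly \<Rightarrow> nat" where
  "num_terms p = card {i. coeff p i \<noteq> 0}"

end

theory Submission
  imports Defs
begin

text \<open>The heart of the matter is the weak form of Descartes' rule of signs: a nonzero real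
polynomial with \<open>t\<close> terms has fewer than \<open>t\<close> positive roots. It follows by induction on the
degree: a vanishing constant term is divided out by \<open>x\<close>, which keeps roots and terms;
otherwise, by Rolle, the derivative has at least one positive root fewer but also exactly one
term fewer. Since \<open>f - g\<close> has at most \<open>2T\<close> terms, it suffices that \<open>f\<close> and \<open>g\<close> agree at
\<open>2T\<close> of the (distinct, positive) nodes: of the at least \<open>2T + E\<close> nodes where \<open>g\<close> matches the
data, at most \<open>E\<close> carry an error.\<close>

lemma finite_nonzero_coeffs: "finite {i. coeff p i \<noteq> 0}"
proof (rule finite_subset)
  show "{i. coeff p i \<noteq> 0} \<subseteq> {..degree p}"
    by (auto intro: le_degree)
qed simp

lemma num_terms_pos:
  assumes "p \<noteq> 0"
  shows "num_terms p > 0"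
proof -
  have "degree p \<in> {i. coeff p i \<noteq> 0}"
    using assms by simp
  then show ?thesis
    unfolding num_terms_def using finite_nonzero_coeffs[of p] card_gt_0_iff by blast
qed

lemma num_terms_pCons_0: "num_terms (pCons 0 p) = num_terms p"
proof -
  have "{i. coeff (pCons 0 p) i \<noteq> 0} = Suc ` {i. coeff p i \<noteq> 0}"
  proof (intro set_eqI iffI)
    fix i
    assume "i \<in> {i. coeff (pCons 0 p) i \<noteq> 0}"
    then show "i \<in> Suc ` {i. coeff p i \<noteq> 0}"
      by (cases i) (auto simp: coeff_pCons)
  qed (auto simp: coeff_pCons)
  then show ?thesis
    unfolding num_terms_def by (simp add: card_image)
qed

lemma num_terms_pderiv:
  fixes p :: "'a::{comm_semiring_1,semiring_no_zero_divisors,semiring_char_0} poly"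
  assumes "coeff p 0 \<noteq> 0"
  shows "num_terms p = Suc (num_terms (pderiv p))"
proof -
  have "{i. coeff (pderiv p) i \<noteq> 0} = {i. coeff p (Suc i) \<noteq> 0}"
    by (simp add: coeff_pderiv del: of_nat_Suc)
  moreover have "{i. coeff p i \<noteq> 0} = insert 0 (Suc ` {i. coeff p (Suc i) \<noteq> 0})"
  proof (intro set_eqI iffI)
    fix i
    assume "i \<in> {i. coeff p i \<noteq> 0}"
    then show "i \<in> insert 0 (Suc ` {i. coeff p (Suc i) \<noteq> 0})"
      by (cases i) auto
  qed (use assms in auto)
  ultimately show ?thesis
    unfolding num_terms_def using finite_nonzero_coeffs[of "pderiv p"] by (simp add: card_image)
qed

lemma num_terms_diff:
  fixes p q :: "'a::ab_group_add poly"
  shows "num_terms (p - q) \<le> num_terms p + num_terms q"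
proof -
  have "num_terms (p - q) \<le> card ({i. coeff p i \<noteq> 0} \<union> {i. coeff q i \<noteq> 0})"
    unfolding num_terms_def by (intro card_mono) (auto simp: finite_nonzero_coeffs)
  also have "\<dots> \<le> num_terms p + num_terms q"
    unfolding num_terms_def by (rule card_Un_le)
  finally show ?thesis .
qed

lemma poly_pderiv_root_between:
  fixes p :: "real poly"
  assumes "a < b" "poly p a = 0" "poly p b = 0"
  obtains c where "a < c" "c < b" "poly (pderiv p) c = 0"
  using poly_MVT[OF assms(1), of p] assms by auto

lemma pderiv_roots_between:
  fixes p :: "real poly"
  assumes "finite S" "S \<noteq> {}" "\<forall>x\<in>S. poly p x = 0"
  shows "\<exists>S'. finite S' \<and> card S' = card S - 1 \<and> S' \<subseteq> {Min S<..<Max S} \<and>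
    (\<forall>x\<in>S'. poly (pderiv p) x = 0)"
  using assms
proof (induction "card S" arbitrary: S)
  case 0
  then show ?case by simp
next
  case (Suc n)
  show ?case
  proof (cases "n = 0")
    case True
    then show ?thesis using Suc.hyps(2) by (intro exI[of _ "{}"]) auto
  next
    case False
    define m where "m = Max S"
    define S0 where "S0 = S - {m}"
    have "m \<in> S"
      using Suc.prems m_def by simp
    then have card_S0: "card S0 = n"
      using Suc by (simp add: S0_def)
    then have "S0 \<noteq> {}"
      using False by auto
    have "finite S0" "S0 \<subseteq> S"
      using Suc.prems by (auto simp: S0_def)
    obtain S0' where S0': "finite S0'" "card S0' = n - 1" "S0' \<subseteq> {Min S0<..<Max S0}"
      "\<forall>x\<in>S0'. poly (pderiv p) x = 0"
      using Suc.hyps(1)[of S0] card_S0 \<open>finite S0\<close> \<open>S0 \<noteq> {}\<close> \<open>S0 \<subseteq> S\<close> Suc.prems(3) by auto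
    have "Max S0 \<in> S0"
      using \<open>finite S0\<close> \<open>S0 \<noteq> {}\<close> by simp
    then have "Max S0 < m"
      using Suc.prems(1) by (auto simp: S0_def m_def order.strict_iff_order)
    then obtain c where c: "Max S0 < c" "c < m" "poly (pderiv p) c = 0"
    proof (rule poly_pderiv_root_between)
      show "poly p (Max S0) = 0" "poly p m = 0"
        using \<open>Max S0 \<in> S0\<close> \<open>m \<in> S\<close> \<open>S0 \<subseteq> S\<close> Suc.prems(3) by auto
    qed
    have "Min S \<le> Min S0"
      using Suc.prems(1) \<open>S0 \<subseteq> S\<close> \<open>S0 \<noteq> {}\<close> by (simp add: Min_antimono)
    moreover have "Min S0 \<le> Max S0"
      using \<open>finite S0\<close> \<open>S0 \<noteq> {}\<close> by simp
    ultimately have "insert c S0' \<subseteq> {Min S<..<Max S}"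
      using S0'(3) c \<open>Max S0 < m\<close> by (auto simp: m_def)
    moreover have "card (insert c S0') = n"
      using S0'(1-3) c(1) False by (subst card_insert_disjoint) auto
    ultimately show ?thesis
      using S0' c Suc.hyps(2) by (intro exI[of _ "insert c S0'"]) auto
  qed
qed

theorem card_positive_roots_less_num_terms:
  fixes p :: "real poly"
  assumes "p \<noteq> 0" "finite S" "S \<subseteq> {0<..}" "\<forall>x\<in>S. poly p x = 0"
  shows "card S < num_terms p"
  using assms
proof (induction "degree p" arbitrary: p S rule: less_induct)
  case less
  show ?case
  proof (cases "S = {}")
    case True
    then show ?thesis using num_terms_pos[OF less.prems(1)] by simp
  next
    case S_nonempty: False
    show ?thesis
    proof (cases "coeff p 0 = 0")
      case True
      obtain q where p_eq: "p = pCons 0 q"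
        using True by (cases p) auto
      then have "q \<noteq> 0" and degree_q: "degree q < degree p"
        using less.prems(1) by auto
      moreover have "\<forall>x\<in>S. poly q x = 0"
        using less.prems(3,4) p_eq by fastforce
      ultimately have "card S < num_terms q"
        using less.hyps[OF degree_q] less.prems(2,3) by blast
      then show ?thesis
        by (simp only: p_eq num_terms_pCons_0)
    next
      case False
      have "degree p \<noteq> 0"
      proof
        assume "degree p = 0"
        then obtain c where "p = [:c:]"
          by (rule degree_eq_zeroE)
        moreover obtain x where "x \<in> S"
          using S_nonempty by blast
        ultimately show False
          using False less.prems(4) by auto
      qed
      then have "pderiv p \<noteq> 0" and degree_pderiv_less: "degree (pderiv p) < degree p"
        by (auto simp: pderiv_eq_0_iff degree_pderiv)
      obtain S' where S': "finite S'" "card S' = card S - 1" "S' \<subseteq> {Min S<..<Max S}"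
        "\<forall>x\<in>S'. poly (pderiv p) x = 0"
        using pderiv_roots_between[OF less.prems(2) S_nonempty less.prems(4)] by blast
      have "Min S > 0"
        using less.prems(2,3) S_nonempty by auto
      then have "S' \<subseteq> {0<..}"
        using S'(3) by auto
      then have "card S' < num_terms (pderiv p)"
        using less.hyps[OF degree_pderiv_less] \<open>pderiv p \<noteq> 0\<close> S'(1,4) by blast
      then show ?thesis
        using S'(2) num_terms_pderiv[OF False] S_nonempty less.prems(2) by (simp add: card_gt_0_iff)
    qed
  qed
qed

lemma sparse_poly_eqI:
  fixes p q :: "real poly"
  assumes "num_terms p \<le> T" "num_terms q \<le> T"
    and "finite X" "X \<subseteq> {0<..}" "card X \<ge> 2 * T" "\<forall>x\<in>X. poly p x = poly q x"
  shows "p = q"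
proof (rule ccontr)
  assume "p \<noteq> q"
  then have "card X < num_terms (p - q)"
    using card_positive_roots_less_num_terms[of "p - q" X] assms(3,4,6) by simp
  then show False
    using num_terms_diff[of p q] assms(1,2,5) by linarith
qed

theorem corollary2:
  fixes T E :: nat and f g :: "real poly" and \<xi> y \<epsilon> :: "nat \<Rightarrow> real"
  assumes "T \<ge> 1"
    and "num_terms f \<le> T"
    and "inj_on \<xi> {1..2*T+2*E}"
    and "\<forall>i\<in>{1..2*T+2*E}. \<xi> i > 0"
    and "\<forall>i\<in>{1..2*T+2*E}. y i = poly f (\<xi> i) + \<epsilon> i"
    and "card {i\<in>{1..2*T+2*E}. \<epsilon> i \<noteq> 0} \<le> E"
    and "num_terms g \<le> T"
    and "card {i\<in>{1..2*T+2*E}. poly g (\<xi> i) = y i} \<ge> 2*T+E"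
  shows "g = f"
proof -
  define I where "I = {1..2*T+2*E}"
  define good where "good = {i\<in>I. poly g (\<xi> i) = y i} - {i\<in>I. \<epsilon> i \<noteq> 0}"
  have "good \<subseteq> {1..2*T+2*E}"
    by (auto simp: good_def I_def)
  have "card {i\<in>I. poly g (\<xi> i) = y i} - card {i\<in>I. \<epsilon> i \<noteq> 0} \<le> card good"
    unfolding good_def by (rule diff_card_le_card_Diff) (simp add: I_def)
  also have "card good = card (\<xi> ` good)"
    using inj_on_subset[OF assms(3) \<open>good \<subseteq> {1..2*T+2*E}\<close>] by (rule card_image[symmetric])
  finally have "card (\<xi> ` good) \<ge> 2*T"
    using assms(6,8) unfolding I_def by linarith
  moreover have "\<xi> ` good \<subseteq> {0<..}"
    using assms(4) \<open>good \<subseteq> {1..2*T+2*E}\<close> by auto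
  moreover have "\<forall>x\<in>\<xi> ` good. poly g x = poly f x"
    using assms(5) by (auto simp: good_def I_def)
  moreover have "finite (\<xi> ` good)"
    using \<open>good \<subseteq> {1..2*T+2*E}\<close> finite_subset by blast
  ultimately show ?thesis
    using sparse_poly_eqI[OF assms(7,2)] by blast
qed

end
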